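(* Let $m\ge 2$ and let $e_1=(1,0)$, $e_2=(0,1)$ be the standard generating set of $\mathbb{Z}\times\mathbb{Z}_m$. Then $\mathrm{Cay}(\mathbb{Z}\times\mathbb{Z}_m;e_1,e_2)$ has two arc-disjoint two-way infinite hamiltonian paths if and only if $m=2$.
   Context: The Cayley digraph $\mathrm{Cay}(G;a,b)$ has vertex set $G$ and an arc from $v$ to $v+s$ for all $v\in G$, $s\in\{a,b\}$. A two-way infinite hamiltonian path is a doubly-infinite sequence $\ldots,v_{-1},v_0,v_1,\ldots$ listing every vertex exactly once with an arc from $v_i$ to $v_{i+1}$ for all $i\in\mathbb{Z}$. Arc-disjoint means sharing no arc. *)

theory Defs
  imports Main
begin

definition ZZm :: "nat \<Rightarrow> (int \<times> int) set" where
  "ZZm m = {(x, y). 0 \<le> y \<and> y < int m}"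

definition add_ZZm :: "nat \<Rightarrow> int \<times> int \<Rightarrow> int \<times> int \<Rightarrow> int \<times> int" where
  "add_ZZm m u s = (fst u + fst s, (snd u + snd s) mod int m)"

definition e1 :: "int \<times> int" where "e1 = (1, 0)"
definition e2 :: "int \<times> int" where "e2 = (0, 1)"

definition cay_arc :: "nat \<Rightarrow> int \<times> int \<Rightarrow> int \<times> int \<Rightarrow> bool" where
  "cay_arc m u v \<longleftrightarrow> u \<in> ZZm m \<and> (v = add_ZZm m u e1 \<or> v = add_ZZm m u e2)"

definition two_way_ham_path :: "nat \<Rightarrow> (int \<Rightarrow> int \<times> int) \<Rightarrow> bool" where
  "two_way_ham_path m f \<longleftrightarrow> bij_betw f UNIV (ZZm m) \<and> (\<forall>i. cay_arc m (f i) (f (i + 1)))"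

definition path_arcs :: "(int \<Rightarrow> int \<times> int) \<Rightarrow> ((int \<times> int) \<times> (int \<times> int)) set" where
  "path_arcs f = {(f i, f (i + 1)) | i. True}"

definition arc_disjoint :: "(int \<Rightarrow> int \<times> int) \<Rightarrow> (int \<Rightarrow> int \<times> int) \<Rightarrow> bool" where
  "arc_disjoint f g \<longleftrightarrow> path_arcs f \<inter> path_arcs g = {}"

end

theory Submission
  imports Defs
begin

(* For m = 2 the staircase (0,0), (0,1), (1,1), (1,0), (2,0), ... and its translate by e2 are
   arc-disjoint, since at every vertex they leave by different generators.

   Conversely, arc-disjoint paths f and g leave every vertex by different generators, so f
   determines g. The vertex (x+1,y) has the in-neighbours (x,y) (via e1) and (x+1,y-1) (via e2)
   and is entered only once by each path; hence whether f leaves a vertex by e1 is constant along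
   the diagonals x + y = const (mod m). If m >= 3, two of the diagonals 0, 1, 2 carry the same
   choice, so one of the two paths leaves all vertices of two diagonals by e1. Along that path
   x + y grows by 1 (mod m) at each step and x never decreases, so x grows by at least 2 in any
   m consecutive steps. But (0,0) and (1,m-1) lie on the same diagonal, so the path needs at
   least m steps from the first to the second, while x only grows by 1. *)

lemma periodic_mod_eq:
  fixes P :: "int \<Rightarrow> 'a"
  assumes periodic: "\<And>x. P (x + c) = P x" and "a mod c = b mod c"
  shows "P a = P b"
proof -
  have multiple: "P (x + k * c) = P x" for x k
  proof (induction k rule: int_induct[where k = 0])
    case (step1 k)
    then show ?case using periodic[of "x + k * c"] by (simp add: algebra_simps)
  next
    case (step2 k)
    then show ?case using periodic[of "x + (k - 1) * c"] by (simp add: algebra_simps)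
  qed simp
  have "P a = P (a mod c)" using multiple[of "a mod c" "a div c"] by simp
  also have "\<dots> = P b" using multiple[of "b mod c" "b div c"] \<open>a mod c = b mod c\<close> by simp
  finally show ?thesis .
qed

lemma two_of_three_agree:
  fixes P :: "'a \<Rightarrow> bool"
  assumes "x \<noteq> y" "x \<noteq> z" "y \<noteq> z"
  obtains a b where "a \<in> {x, y, z}" "b \<in> {x, y, z}" "a \<noteq> b" "P a \<longleftrightarrow> P b"
proof -
  consider "P x \<longleftrightarrow> P y" | "P x \<longleftrightarrow> P z" | "P y \<longleftrightarrow> P z"
    by blast
  then show thesis
  proof cases
    case 1
    then show thesis using that[of x y] assms by simp
  next
    case 2
    then show thesis using that[of x z] assms by simp
  next
    case 3
    then show thesis using that[of y z] assms by simp
  qed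
qed

definition diag :: "nat \<Rightarrow> int \<times> int \<Rightarrow> int" where
  "diag m v = (fst v + snd v) mod int m"

lemma add_ZZm_in_ZZm: "m > 0 \<Longrightarrow> add_ZZm m u s \<in> ZZm m"
  by (simp add: add_ZZm_def ZZm_def)

lemma ZZm_snd_mod: "v \<in> ZZm m \<Longrightarrow> snd v mod int m = snd v"
  by (auto simp: ZZm_def)

lemma add_ZZm_e1: "v \<in> ZZm m \<Longrightarrow> add_ZZm m v e1 = (fst v + 1, snd v)"
  by (auto simp: add_ZZm_def e1_def ZZm_def)

lemma add_ZZm_e1_neq_e2: "add_ZZm m v e1 \<noteq> add_ZZm m v e2"
  by (simp add: add_ZZm_def e1_def e2_def)

lemma add_ZZm_commute_right:
  "v \<in> ZZm m \<Longrightarrow> add_ZZm m (add_ZZm m v s) t = add_ZZm m (add_ZZm m v t) s"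
  by (auto simp: add_ZZm_def ZZm_def mod_simps ac_simps)

lemma bij_betw_add_ZZm:
  assumes "m > 0"
  shows "bij_betw (\<lambda>v. add_ZZm m v t) (ZZm m) (ZZm m)"
  by (rule bij_betw_byWitness[where f' = "\<lambda>v. add_ZZm m v (- fst t, - snd t)"])
    (use assms in \<open>auto simp: add_ZZm_def ZZm_def mod_simps\<close>)

lemma diag_add_ZZm_e2: "diag m (add_ZZm m v e2) = (diag m v + 1) mod int m"
  by (simp add: diag_def add_ZZm_def e2_def mod_simps ac_simps)

lemma diag_cay_arc: "cay_arc m u v \<Longrightarrow> diag m v = (diag m u + 1) mod int m"
  by (auto simp: cay_arc_def diag_def add_ZZm_def e1_def e2_def ZZm_snd_mod mod_simps ac_simps)

lemma cay_arc_fst_le: "cay_arc m u v \<Longrightarrow> fst u \<le> fst v"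
  by (auto simp: cay_arc_def add_ZZm_def e1_def e2_def)

definition cay_walk :: "nat \<Rightarrow> (int \<Rightarrow> int \<times> int) \<Rightarrow> bool" where
  "cay_walk m f \<longleftrightarrow> (\<forall>i. cay_arc m (f i) (f (i + 1)))"

lemma cay_walk_arc: "cay_walk m f \<Longrightarrow> cay_arc m (f i) (f (i + 1))"
  by (simp add: cay_walk_def)

lemma two_way_ham_path_cay_walk: "two_way_ham_path m f \<Longrightarrow> cay_walk m f"
  by (simp add: two_way_ham_path_def cay_walk_def)

lemma two_way_ham_path_inj: "two_way_ham_path m f \<Longrightarrow> inj f"
  by (simp add: two_way_ham_path_def bij_betw_def)

lemma two_way_ham_path_range: "two_way_ham_path m f \<Longrightarrow> range f = ZZm m"
  by (simp add: two_way_ham_path_def bij_betw_def)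

lemma two_way_ham_path_in_ZZm: "two_way_ham_path m f \<Longrightarrow> f i \<in> ZZm m"
  unfolding two_way_ham_path_def by (metis bij_betw_apply UNIV_I)

lemma two_way_ham_path_translate:
  assumes "m > 0" and "two_way_ham_path m f"
  shows "two_way_ham_path m (\<lambda>i. add_ZZm m (f i) t)"
  unfolding two_way_ham_path_def
proof
  show "bij_betw (\<lambda>i. add_ZZm m (f i) t) UNIV (ZZm m)"
    using bij_betw_trans[OF _ bij_betw_add_ZZm[OF \<open>m > 0\<close>]] assms(2)
    unfolding two_way_ham_path_def comp_def by blast
  show "\<forall>i. cay_arc m (add_ZZm m (f i) t) (add_ZZm m (f (i + 1)) t)"
    using assms add_ZZm_commute_right add_ZZm_in_ZZm
    unfolding two_way_ham_path_def cay_arc_def by metis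
qed

(* (0,0), (0,1), (1,1), (1,0), (2,0), (2,1), ...: the steps alternate between e2 and e1. *)
definition stair :: "int \<Rightarrow> int \<times> int" where
  "stair i = (i div 2, ((i + 1) div 2) mod 2)"

lemma diag_stair: "diag 2 (stair i) = i mod 2"
  unfolding diag_def stair_def by simp presburger

lemma stair_step: "stair (i + 1) = add_ZZm 2 (stair i) (if even i then e2 else e1)"
  unfolding stair_def add_ZZm_def e1_def e2_def by simp presburger

lemma two_way_ham_path_stair: "two_way_ham_path 2 stair"
  unfolding two_way_ham_path_def
proof
  show "bij_betw stair UNIV (ZZm 2)"
    by (rule bij_betw_byWitness[where f' = "\<lambda>(x, y). 2 * x + (x + y) mod 2"])
      (auto simp: stair_def ZZm_def, presburger+)
  show "\<forall>i. cay_arc 2 (stair i) (stair (i + 1))"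
    by (auto simp: cay_arc_def stair_step) (auto simp: stair_def ZZm_def)
qed

lemma arc_disjoint_stair_translate: "arc_disjoint stair (\<lambda>i. add_ZZm 2 (stair i) e2)"
proof -
  have "stair (i + 1) \<noteq> add_ZZm 2 (stair (j + 1)) e2"
    if same_tail: "stair i = add_ZZm 2 (stair j) e2" for i j
  proof -
    have "i mod 2 = (j + 1) mod 2"
      using arg_cong[OF same_tail, of "diag 2"] by (simp add: diag_stair diag_add_ZZm_e2 mod_simps)
    then have parity: "even i \<longleftrightarrow> odd j"
      by presburger
    have "add_ZZm 2 (stair (j + 1)) e2 = add_ZZm 2 (add_ZZm 2 (stair j) (if even j then e2 else e1)) e2"
      by (simp only: stair_step)
    also have "\<dots> = add_ZZm 2 (stair i) (if even j then e2 else e1)"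
      using add_ZZm_commute_right[OF two_way_ham_path_in_ZZm[OF two_way_ham_path_stair]] same_tail
      by simp
    finally show ?thesis
      using parity add_ZZm_e1_neq_e2[of 2 "stair i"] by (auto simp: stair_step)
  qed
  then show ?thesis
    unfolding arc_disjoint_def path_arcs_def by blast
qed

lemma cay_walk_fst_mono:
  fixes i j :: int
  assumes walk: "cay_walk m f" and "i \<le> j"
  shows "fst (f i) \<le> fst (f j)"
  using \<open>i \<le> j\<close>
proof (induction j rule: int_ge_induct)
  case (step j)
  then show ?case
    using cay_arc_fst_le[OF cay_walk_arc[OF walk, of j]] by linarith
qed simp

lemma cay_walk_diag:
  fixes i j :: int
  assumes walk: "cay_walk m f" and "i \<le> j"
  shows "diag m (f j) = (diag m (f i) + (j - i)) mod int m"
  using \<open>i \<le> j\<close>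
proof (induction j rule: int_ge_induct)
  case base
  then show ?case
    by (simp add: diag_def)
next
  case (step j)
  have "diag m (f (j + 1)) = (diag m (f j) + 1) mod int m"
    using diag_cay_arc[OF cay_walk_arc[OF walk]] .
  also have "\<dots> = (diag m (f i) + (j - i) + 1) mod int m"
    using step.IH by (simp add: mod_simps)
  finally show ?case
    by (simp add: algebra_simps)
qed

lemma cay_walk_same_diag_dist:
  assumes walk: "cay_walk m f" and "i < j" and same_diag: "diag m (f i) = diag m (f j)"
  shows "i + int m \<le> j"
proof -
  have "(diag m (f i) + (j - i)) mod int m = diag m (f i) mod int m"
    using cay_walk_diag[OF walk, of i j] \<open>i < j\<close> same_diag by (simp add: diag_def)
  then have "int m dvd j - i"
    by (simp add: mod_eq_dvd_iff)
  then show ?thesis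
    using zdvd_imp_le[of "int m" "j - i"] \<open>i < j\<close> by simp
qed

lemma cay_walk_fst_gain:
  assumes walk: "cay_walk m f"
    and order: "i \<le> a" "a < b" "b < j"
    and "f (a + 1) = add_ZZm m (f a) e1" "f (b + 1) = add_ZZm m (f b) e1"
  shows "fst (f i) + 2 \<le> fst (f j)"
proof -
  have "fst (f (k + 1)) = fst (f k) + 1" if "f (k + 1) = add_ZZm m (f k) e1" for k
    using that cay_walk_arc[OF walk, of k] by (simp add: cay_arc_def add_ZZm_e1)
  then have "fst (f (a + 1)) = fst (f a) + 1" "fst (f (b + 1)) = fst (f b) + 1"
    using assms by simp_all
  moreover have "fst (f i) \<le> fst (f a)" "fst (f (a + 1)) \<le> fst (f b)" "fst (f (b + 1)) \<le> fst (f j)"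
    using order by (simp_all add: cay_walk_fst_mono[OF walk])
  ultimately show ?thesis
    by linarith
qed

definition path_succ :: "(int \<Rightarrow> int \<times> int) \<Rightarrow> int \<times> int \<Rightarrow> int \<times> int" where
  "path_succ f v = f (inv f v + 1)"

definition leaves_by_e1 :: "nat \<Rightarrow> (int \<Rightarrow> int \<times> int) \<Rightarrow> int \<times> int \<Rightarrow> bool" where
  "leaves_by_e1 m f v \<longleftrightarrow> path_succ f v = add_ZZm m v e1"

lemma path_succ_apply: "inj f \<Longrightarrow> path_succ f (f i) = f (i + 1)"
  by (simp add: path_succ_def)

lemma path_succ_in_path_arcs: "inj f \<Longrightarrow> v \<in> range f \<Longrightarrow> (v, path_succ f v) \<in> path_arcs f"
  unfolding path_arcs_def by (auto simp: path_succ_apply)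

lemma two_way_ham_path_path_succ:
  assumes "two_way_ham_path m f" and "v \<in> ZZm m"
  shows "path_succ f v = add_ZZm m v (if leaves_by_e1 m f v then e1 else e2)"
proof -
  obtain i where "v = f i"
    using assms two_way_ham_path_range by blast
  moreover have "cay_arc m (f i) (f (i + 1))"
    using assms(1) by (simp add: two_way_ham_path_def)
  ultimately show ?thesis
    using path_succ_apply[OF two_way_ham_path_inj[OF assms(1)]]
    by (auto simp: cay_arc_def leaves_by_e1_def)
qed

lemma inj_on_path_succ:
  assumes "two_way_ham_path m f"
  shows "inj_on (path_succ f) (ZZm m)"
proof
  fix v w
  assume "v \<in> ZZm m" "w \<in> ZZm m" and succ_eq: "path_succ f v = path_succ f w"
  then obtain i j where "v = f i" "w = f j"
    using two_way_ham_path_range[OF assms] by blast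
  moreover have "inj f"
    using assms by (rule two_way_ham_path_inj)
  ultimately show "v = w"
    using succ_eq by (simp add: path_succ_apply inj_eq)
qed

lemma no_two_way_ham_path_leaving_two_diagonals_by_e1:
  assumes f: "two_way_ham_path m f"
    and r: "r1 \<in> {0..<int m}" "r2 \<in> {0..<int m}" "r1 \<noteq> r2"
    and leaves: "\<And>v. v \<in> ZZm m \<Longrightarrow> diag m v \<in> {r1, r2} \<Longrightarrow> leaves_by_e1 m f v"
  shows False
proof -
  have walk: "cay_walk m f"
    using f by (rule two_way_ham_path_cay_walk)
  have "m > 0"
    using r by auto
  then have "(0, 0) \<in> range f" "(1, int m - 1) \<in> range f"
    using two_way_ham_path_range[OF f] by (auto simp: ZZm_def)
  then obtain i0 j where i0: "f i0 = (0, 0)" and j: "f j = (1, int m - 1)"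
    by (metis rangeE)
  have "i0 < j"
    using cay_walk_fst_mono[OF walk, of j i0] i0 j by fastforce
  have "i0 + int m \<le> j"
    using cay_walk_same_diag_dist[OF walk \<open>i0 < j\<close>] i0 j by (simp add: diag_def)
  have e1_step: "f (i0 + r + 1) = add_ZZm m (f (i0 + r)) e1" if "r \<in> {r1, r2}" for r
  proof -
    have "diag m (f (i0 + r)) = r"
      using cay_walk_diag[OF walk, of i0 "i0 + r"] i0 that r by (auto simp: diag_def)
    then have "leaves_by_e1 m f (f (i0 + r))"
      using leaves two_way_ham_path_in_ZZm[OF f] that by simp
    then show ?thesis
      using path_succ_apply[OF two_way_ham_path_inj[OF f]] by (simp add: leaves_by_e1_def)
  qed
  have "fst (f i0) + 2 \<le> fst (f j)"
    by (rule cay_walk_fst_gain[OF walk, of _ "i0 + min r1 r2" "i0 + max r1 r2"])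
      (use r \<open>i0 + int m \<le> j\<close> e1_step in \<open>auto simp: min_def max_def\<close>)
  then show False
    using i0 j by simp
qed

lemma arc_disjoint_leaves_by_e1:
  assumes f: "two_way_ham_path m f" and g: "two_way_ham_path m g"
    and "arc_disjoint f g" and v: "v \<in> ZZm m"
  shows "leaves_by_e1 m g v \<longleftrightarrow> \<not> leaves_by_e1 m f v"
proof -
  have "(v, path_succ f v) \<in> path_arcs f" "(v, path_succ g v) \<in> path_arcs g"
    using v f g by (simp_all add: path_succ_in_path_arcs two_way_ham_path_inj two_way_ham_path_range)
  then have "path_succ f v \<noteq> path_succ g v"
    using \<open>arc_disjoint f g\<close> by (auto simp: arc_disjoint_def)
  then show ?thesis
    using two_way_ham_path_path_succ[OF f v] two_way_ham_path_path_succ[OF g v]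
      add_ZZm_e1_neq_e2[of m v] by (auto split: if_splits)
qed

lemma leaves_by_e1_shift:
  assumes h: "two_way_ham_path m h" and y: "0 \<le> y" "y < int m"
    and "leaves_by_e1 m h (x, y)"
  shows "leaves_by_e1 m h (x + 1, (y - 1) mod int m)"
proof (rule ccontr)
  let ?q = "(x + 1, (y - 1) mod int m)"
  assume "\<not> leaves_by_e1 m h ?q"
  have in_ZZm: "(x, y) \<in> ZZm m" "?q \<in> ZZm m"
    using y by (auto simp: ZZm_def)
  have "path_succ h (x, y) = (x + 1, y)"
    using \<open>leaves_by_e1 m h (x, y)\<close> y by (simp add: leaves_by_e1_def add_ZZm_def e1_def)
  moreover have "path_succ h ?q = (x + 1, y)"
    using two_way_ham_path_path_succ[OF h in_ZZm(2)] \<open>\<not> leaves_by_e1 m h ?q\<close> y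
    by (simp add: add_ZZm_def e2_def mod_simps)
  ultimately have "(x, y) = ?q"
    using inj_on_path_succ[OF h] in_ZZm by (metis inj_on_eq_iff)
  then show False
    by simp
qed

lemma arc_disjoint_leaves_by_e1_shift:
  assumes f: "two_way_ham_path m f" and g: "two_way_ham_path m g" and "arc_disjoint f g"
    and y: "0 \<le> y" "y < int m"
  shows "leaves_by_e1 m f (x + 1, (y - 1) mod int m) \<longleftrightarrow> leaves_by_e1 m f (x, y)"
proof -
  have "(x, y) \<in> ZZm m" "(x + 1, (y - 1) mod int m) \<in> ZZm m"
    using y by (auto simp: ZZm_def)
  then show ?thesis
    using leaves_by_e1_shift[OF f y, of x] leaves_by_e1_shift[OF g y, of x]
      arc_disjoint_leaves_by_e1[OF f g \<open>arc_disjoint f g\<close>] by blast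
qed

lemma arc_disjoint_leaves_by_e1_diag:
  assumes f: "two_way_ham_path m f" and g: "two_way_ham_path m g" and "arc_disjoint f g"
    and v: "v \<in> ZZm m"
  shows "leaves_by_e1 m f v \<longleftrightarrow> leaves_by_e1 m f (diag m v, 0)"
proof -
  note shift = arc_disjoint_leaves_by_e1_shift[OF f g \<open>arc_disjoint f g\<close>]
  have m: "m > 0"
    using v by (auto simp: ZZm_def)
  have along_diag: "leaves_by_e1 m f (x, int n) \<longleftrightarrow> leaves_by_e1 m f (x + int n, 0)"
    if "n < m" for x n
    using that
  proof (induction n arbitrary: x)
    case (Suc n)
    then show ?case
      using shift[of "int (Suc n)" x] Suc.IH[of "x + 1"] by (simp add: ac_simps)
  qed simp
  have periodic: "leaves_by_e1 m f (x + int m, 0) \<longleftrightarrow> leaves_by_e1 m f (x, 0)" for x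
  proof -
    have "(0 - 1) mod int m = int (m - 1)"
      using m by (simp add: zmod_minus1 of_nat_diff)
    then show ?thesis
      using shift[of 0 x] along_diag[of "m - 1" "x + 1"] m by (simp add: of_nat_diff)
  qed
  obtain x y where xy: "v = (x, y)" "0 \<le> y" "y < int m"
    using v by (auto simp: ZZm_def)
  have "leaves_by_e1 m f v \<longleftrightarrow> leaves_by_e1 m f (x + y, 0)"
    using along_diag[of "nat y" x] xy by simp
  also have "\<dots> \<longleftrightarrow> leaves_by_e1 m f (diag m v, 0)"
    by (rule periodic_mod_eq[where P = "\<lambda>x. leaves_by_e1 m f (x, 0)", OF periodic])
      (simp add: xy diag_def)
  finally show ?thesis .
qed

lemma arc_disjoint_two_way_ham_paths_le_2:
  assumes f: "two_way_ham_path m f" and g: "two_way_ham_path m g" and "arc_disjoint f g"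
  shows "m \<le> 2"
proof (rule ccontr)
  assume "\<not> m \<le> 2"
  obtain r1 r2 :: int where r: "r1 \<in> {0, 1, 2}" "r2 \<in> {0, 1, 2}" "r1 \<noteq> r2"
    and same: "leaves_by_e1 m f (r1, 0) \<longleftrightarrow> leaves_by_e1 m f (r2, 0)"
    using two_of_three_agree[of 0 1 2 "\<lambda>r. leaves_by_e1 m f (r, 0)"] by auto
  have r_range: "r1 \<in> {0..<int m}" "r2 \<in> {0..<int m}"
    using r \<open>\<not> m \<le> 2\<close> by auto
  have on_diagonals: "leaves_by_e1 m f v \<longleftrightarrow> leaves_by_e1 m f (r1, 0)"
    if "v \<in> ZZm m" "diag m v \<in> {r1, r2}" for v
    using arc_disjoint_leaves_by_e1_diag[OF f g \<open>arc_disjoint f g\<close> \<open>v \<in> ZZm m\<close>] same that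
    by auto
  show False
  proof (cases "leaves_by_e1 m f (r1, 0)")
    case True
    show False
    proof (rule no_two_way_ham_path_leaving_two_diagonals_by_e1[OF f r_range r(3)])
      fix v
      assume "v \<in> ZZm m" "diag m v \<in> {r1, r2}"
      then show "leaves_by_e1 m f v"
        using on_diagonals True by simp
    qed
  next
    case False
    show False
    proof (rule no_two_way_ham_path_leaving_two_diagonals_by_e1[OF g r_range r(3)])
      fix v
      assume "v \<in> ZZm m" "diag m v \<in> {r1, r2}"
      then show "leaves_by_e1 m g v"
        using on_diagonals False arc_disjoint_leaves_by_e1[OF f g \<open>arc_disjoint f g\<close>] by simp
    qed
  qed
qed

theorem mainTheorem17:
  fixes m :: nat
  assumes "m \<ge> 2"
  shows "(\<exists>f g. two_way_ham_path m f \<and> two_way_ham_path m g \<and> arc_disjoint f g) \<longleftrightarrow> m = 2"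
proof
  assume "\<exists>f g. two_way_ham_path m f \<and> two_way_ham_path m g \<and> arc_disjoint f g"
  then have "m \<le> 2"
    using arc_disjoint_two_way_ham_paths_le_2 by blast
  then show "m = 2"
    using assms by simp
next
  assume "m = 2"
  moreover have "two_way_ham_path 2 (\<lambda>i. add_ZZm 2 (stair i) e2)"
    by (rule two_way_ham_path_translate) (simp_all add: two_way_ham_path_stair)
  ultimately show "\<exists>f g. two_way_ham_path m f \<and> two_way_ham_path m g \<and> arc_disjoint f g"
    using two_way_ham_path_stair arc_disjoint_stair_translate by blast
qed

end
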